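(* Let $\mathbb{C}$ be a partial category, $f:A\to B$ a morphism and $V\le B$. Let $m=\mathrm{id}_B{\downarrow}V:V\to B$ and $m'=\mathrm{id}_A{\downarrow}(A{\uparrow}_fV):A{\uparrow}_fV\to A$. Then the square with sides $f{\uparrow}V:A{\uparrow}_fV\to V$, $m$, $m'$ and $f$ commutes, i.e. $(f{\uparrow}V)m=m'f$, and is a pullback diagram.
   Context: Composition is diagrammatic ($fg$ = first $f$ then $g$). A partial category is a category with a partial order $\le$ on objects, a restriction operator assigning to $U\le A$ and $f:A\to B$ a morphism $f{\downarrow}U:U\to B$, and a contraction operator assigning to $V\le B$ and $f:A\to B$ an object $A{\uparrow}_fV\le A$ and a morphism $f{\uparrow}V:A{\uparrow}_fV\to V$, satisfying: (P.1) $f{\downarrow}A=f$; (P.2) $(f{\downarrow}U){\downarrow}V=f{\downarrow}V$ for $V\le U\le A$; (P.3) $(f{\downarrow}U)g=(fg){\downarrow}U$ for $g:B\to C$; (P.4) $A{\uparrow}_fB=A$ and $f{\uparrow}B=f$; (P.4') $A{\uparrow}_{\mathrm{id}_A}U=U$ and $\mathrm{id}_A{\uparrow}U=\mathrm{id}_U$ for $U\le A$; (P.5) for $W\le V\le B$: $(A{\uparrow}_fV){\uparrow}_{f{\uparrow}V}W=A{\uparrow}_fW$ and $(f{\uparrow}V){\uparrow}W=f{\uparrow}W$; (P.6) for $g:B\to C$, $W\le C$: $A{\uparrow}_f(B{\uparrow}_gW)=A{\uparrow}_{fg}W$ and $(f{\uparrow}(B{\uparrow}_gW))(g{\uparrow}W)=(fg){\uparrow}W$;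 (P.7) for $V\le B$: $(A{\uparrow}_fV){\uparrow}_{f{\downarrow}(A{\uparrow}_fV)}V=A{\uparrow}_fV$ and $(f{\downarrow}(A{\uparrow}_fV)){\uparrow}V=f{\uparrow}V$; (P.8) for $g:B\to C$, $V\le B$: $(fg){\downarrow}(A{\uparrow}_fV)=(f{\uparrow}V)(g{\downarrow}V)$. *)

theory Defs
  imports Main
begin

text \<open>Categories given by explicit carriers. Composition is diagrammatic:
  cmp f g means first f then g, defined when cd f = dm g.\<close>

definition mor :: "'m set \<Rightarrow> ('m \<Rightarrow> 'o) \<Rightarrow> ('m \<Rightarrow> 'o) \<Rightarrow> 'm \<Rightarrow> 'o \<Rightarrow> 'o \<Rightarrow> bool" where
  "mor Arr dm cd f A B \<longleftrightarrow> f \<in> Arr \<and> dm f = A \<and> cd f = B"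

locale category =
  fixes Obj :: "'o set" and Arr :: "'m set"
    and dm :: "'m \<Rightarrow> 'o" and cd :: "'m \<Rightarrow> 'o"
    and cmp :: "'m \<Rightarrow> 'm \<Rightarrow> 'm" and ident :: "'o \<Rightarrow> 'm"
  assumes dm_cd_Obj: "f \<in> Arr \<Longrightarrow> dm f \<in> Obj \<and> cd f \<in> Obj"
    and ident_mor: "A \<in> Obj \<Longrightarrow> mor Arr dm cd (ident A) A A"
    and cmp_mor: "mor Arr dm cd f A B \<Longrightarrow> mor Arr dm cd g B C \<Longrightarrow> mor Arr dm cd (cmp f g) A C"
    and cmp_assoc: "mor Arr dm cd f A B \<Longrightarrow> mor Arr dm cd g B C \<Longrightarrow> mor Arr dm cd h C D \<Longrightarrow>
        cmp (cmp f g) h = cmp f (cmp g h)"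
    and ident_left: "mor Arr dm cd f A B \<Longrightarrow> cmp (ident A) f = f"
    and ident_right: "mor Arr dm cd f A B \<Longrightarrow> cmp f (ident B) = f"

definition is_pullback ::
  "'o set \<Rightarrow> 'm set \<Rightarrow> ('m \<Rightarrow> 'o) \<Rightarrow> ('m \<Rightarrow> 'o) \<Rightarrow> ('m \<Rightarrow> 'm \<Rightarrow> 'm)
   \<Rightarrow> 'o \<Rightarrow> 'o \<Rightarrow> 'o \<Rightarrow> 'o \<Rightarrow> 'm \<Rightarrow> 'm \<Rightarrow> 'm \<Rightarrow> 'm \<Rightarrow> bool" where
  "is_pullback Obj Arr dm cd cmp P A V B p m m' f \<longleftrightarrow>
     mor Arr dm cd p P V \<and> mor Arr dm cd m V B \<and> mor Arr dm cd m' P A \<and> mor Arr dm cd f A B \<and>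
     cmp p m = cmp m' f \<and>
     (\<forall>X\<in>Obj. \<forall>x1 x2. mor Arr dm cd x1 X A \<and> mor Arr dm cd x2 X V \<and> cmp x1 f = cmp x2 m \<longrightarrow>
        (\<exists>!u. mor Arr dm cd u X P \<and> cmp u m' = x1 \<and> cmp u p = x2))"

text \<open>Partial categories. le is the partial order on objects, res f U is f restricted to U,
  cobj f V is the object A contracted along f to V, cmor f V is the contracted morphism.\<close>

locale partial_category = category Obj Arr dm cd cmp ident
  for Obj :: "'o set" and Arr :: "'m set"
    and dm :: "'m \<Rightarrow> 'o" and cd :: "'m \<Rightarrow> 'o"
    and cmp :: "'m \<Rightarrow> 'm \<Rightarrow> 'm" and ident :: "'o \<Rightarrow> 'm" +
  fixes le :: "'o \<Rightarrow> 'o \<Rightarrow> bool"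
    and res :: "'m \<Rightarrow> 'o \<Rightarrow> 'm"
    and cobj :: "'m \<Rightarrow> 'o \<Rightarrow> 'o"
    and cmor :: "'m \<Rightarrow> 'o \<Rightarrow> 'm"
  assumes le_Obj: "le x y \<Longrightarrow> x \<in> Obj \<and> y \<in> Obj"
    and le_refl: "x \<in> Obj \<Longrightarrow> le x x"
    and le_antisym: "le x y \<Longrightarrow> le y x \<Longrightarrow> x = y"
    and le_trans: "le x y \<Longrightarrow> le y z \<Longrightarrow> le x z"
    and res_mor: "mor Arr dm cd f A B \<Longrightarrow> le U A \<Longrightarrow> mor Arr dm cd (res f U) U B"
    and cobj_le: "mor Arr dm cd f A B \<Longrightarrow> le V B \<Longrightarrow> le (cobj f V) A"
    and cmor_mor: "mor Arr dm cd f A B \<Longrightarrow> le V B \<Longrightarrow> mor Arr dm cd (cmor f V) (cobj f V) V"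
    and P1: "mor Arr dm cd f A B \<Longrightarrow> res f A = f"
    and P2: "mor Arr dm cd f A B \<Longrightarrow> le V U \<Longrightarrow> le U A \<Longrightarrow> res (res f U) V = res f V"
    and P3: "mor Arr dm cd f A B \<Longrightarrow> mor Arr dm cd g B C \<Longrightarrow> le U A \<Longrightarrow>
        cmp (res f U) g = res (cmp f g) U"
    and P4: "mor Arr dm cd f A B \<Longrightarrow> cobj f B = A \<and> cmor f B = f"
    and P4': "le U A \<Longrightarrow> cobj (ident A) U = U \<and> cmor (ident A) U = ident U"
    and P5: "mor Arr dm cd f A B \<Longrightarrow> le W V \<Longrightarrow> le V B \<Longrightarrow>
        cobj (cmor f V) W = cobj f W \<and> cmor (cmor f V) W = cmor f W"
    and P6: "mor Arr dm cd f A B \<Longrightarrow> mor Arr dm cd g B C \<Longrightarrow> le W C \<Longrightarrow>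
        cobj f (cobj g W) = cobj (cmp f g) W \<and> cmp (cmor f (cobj g W)) (cmor g W) = cmor (cmp f g) W"
    and P7: "mor Arr dm cd f A B \<Longrightarrow> le V B \<Longrightarrow>
        cobj (res f (cobj f V)) V = cobj f V \<and> cmor (res f (cobj f V)) V = cmor f V"
    and P8: "mor Arr dm cd f A B \<Longrightarrow> mor Arr dm cd g B C \<Longrightarrow> le V B \<Longrightarrow>
        res (cmp f g) (cobj f V) = cmp (cmor f V) (res g V)"

end

theory Submission
  imports Defs
begin

text \<open>Restricted identities \<open>id\<^sub>A\<down>U : U \<rightarrow> A\<close> behave as inclusions: contracting \<open>u ; id\<^sub>A\<down>U\<close> back
  along \<open>U\<close> returns \<open>u\<close> (P6 and P7), and by P8 a contraction \<open>x\<up>U\<close> followed by the inclusion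
  is the restriction of \<open>x\<close> to \<open>A\<up>\<^sub>xU\<close>. Given a cone \<open>x\<^sub>1 : X \<rightarrow> A\<close>, \<open>x\<^sub>2 : X \<rightarrow> V\<close> with
  \<open>x\<^sub>1 f = x\<^sub>2 m\<close>, P6 turns \<open>(x\<^sub>1 f)\<up>V = (x\<^sub>2 m)\<up>V = x\<^sub>2\<close> into a statement about \<open>x\<^sub>1\<up>(A\<up>\<^sub>fV)\<close>,
  which is therefore the mediating morphism; it is unique because every candidate \<open>u\<close> is
  recovered as \<open>(u m')\<up>(A\<up>\<^sub>fV) = x\<^sub>1\<up>(A\<up>\<^sub>fV)\<close>.\<close>

context partial_category
begin

abbreviation incl :: "'o \<Rightarrow> 'o \<Rightarrow> 'm" where
  "incl A U \<equiv> res (ident A) U"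

lemma ident_mor_of_le:
  assumes "le U A"
  shows "mor Arr dm cd (ident A) A A"
  using assms le_Obj ident_mor by blast

lemma incl_mor:
  assumes "le U A"
  shows "mor Arr dm cd (incl A U) U A"
  using res_mor[OF ident_mor_of_le] assms by blast

lemma contract_incl:
  assumes "le U A"
  shows "cobj (incl A U) U = U" and "cmor (incl A U) U = ident U"
  using P7[OF ident_mor_of_le[OF assms] assms] P4'[OF assms] by simp_all

lemma contract_cmp_incl:
  assumes u: "mor Arr dm cd u X U" and UA: "le U A"
  shows "cobj (cmp u (incl A U)) U = X" and "cmor (cmp u (incl A U)) U = u"
  using P6[OF u incl_mor[OF UA] UA] contract_incl[OF UA] P4[OF u] ident_right[OF u] by simp_all

lemma cmp_cmor_incl:
  assumes "mor Arr dm cd f A B" and "le V B"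
  shows "cmp (cmor f V) (incl B V) = res f (cobj f V)"
  using P8[OF assms(1) ident_mor_of_le[OF assms(2)] assms(2)] ident_right[OF assms(1)] by simp

lemma res_eq_cmp_incl:
  assumes "mor Arr dm cd f A B" and "le U A"
  shows "res f U = cmp (incl A U) f"
  using P3[OF ident_mor_of_le[OF assms(2)] assms(1) assms(2)] ident_left[OF assms(1)] by simp

lemma contraction_square_commutes:
  assumes "mor Arr dm cd f A B" and "le V B"
  shows "cmp (cmor f V) (incl B V) = cmp (incl A (cobj f V)) f"
  using cmp_cmor_incl[OF assms] res_eq_cmp_incl[OF assms(1) cobj_le[OF assms]] by simp

lemma cmp_cmor_incl_eq:
  assumes x: "mor Arr dm cd x X A" and "le U A" and "cobj x U = X"
  shows "cmp (cmor x U) (incl A U) = x"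
  using cmp_cmor_incl[OF assms(1,2)] assms(3) P1[OF x] by simp

lemma contract_cone:
  assumes f: "mor Arr dm cd f A B" and V: "le V B"
    and x\<^sub>1: "mor Arr dm cd x\<^sub>1 X A" and x\<^sub>2: "mor Arr dm cd x\<^sub>2 X V"
    and eq: "cmp x\<^sub>1 f = cmp x\<^sub>2 (incl B V)"
  shows "cobj x\<^sub>1 (cobj f V) = X" and "cmp (cmor x\<^sub>1 (cobj f V)) (cmor f V) = x\<^sub>2"
  using P6[OF x\<^sub>1 f V] eq contract_cmp_incl[OF x\<^sub>2 V] by simp_all

lemma contraction_square_pullback:
  assumes f: "mor Arr dm cd f A B" and V: "le V B"
  shows "is_pullback Obj Arr dm cd cmp (cobj f V) A V B
           (cmor f V) (incl B V) (incl A (cobj f V)) f"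
proof -
  let ?P = "cobj f V"
  have PA: "le ?P A" using cobj_le[OF f V] .
  have "\<exists>!u. mor Arr dm cd u X ?P \<and> cmp u (incl A ?P) = x\<^sub>1 \<and> cmp u (cmor f V) = x\<^sub>2"
    if x\<^sub>1: "mor Arr dm cd x\<^sub>1 X A" and x\<^sub>2: "mor Arr dm cd x\<^sub>2 X V"
      and eq: "cmp x\<^sub>1 f = cmp x\<^sub>2 (incl B V)"
    for X x\<^sub>1 x\<^sub>2
  proof
    note cone = contract_cone[OF f V x\<^sub>1 x\<^sub>2 eq]
    show "mor Arr dm cd (cmor x\<^sub>1 ?P) X ?P \<and> cmp (cmor x\<^sub>1 ?P) (incl A ?P) = x\<^sub>1
        \<and> cmp (cmor x\<^sub>1 ?P) (cmor f V) = x\<^sub>2"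
      using cmor_mor[OF x\<^sub>1 PA] cmp_cmor_incl_eq[OF x\<^sub>1 PA] cone by simp
  next
    fix u
    assume "mor Arr dm cd u X ?P \<and> cmp u (incl A ?P) = x\<^sub>1 \<and> cmp u (cmor f V) = x\<^sub>2"
    then show "u = cmor x\<^sub>1 ?P"
      using contract_cmp_incl(2)[of u X ?P A, OF _ PA] by auto
  qed
  then show ?thesis
    unfolding is_pullback_def
    using cmor_mor[OF f V] incl_mor[OF V] incl_mor[OF PA] f contraction_square_commutes[OF f V]
    by blast
qed

end

theorem lemma10p10:
  assumes "partial_category Obj Arr dm cd cmp ident le res cobj cmor"
    and "mor Arr dm cd f A B"
    and "le V B"
  shows "cmp (cmor f V) (res (ident B) V) = cmp (res (ident A) (cobj f V)) f
    \<and> is_pullback Obj Arr dm cd cmp (cobj f V) A V B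
        (cmor f V) (res (ident B) V) (res (ident A) (cobj f V)) f"
  using partial_category.contraction_square_commutes[OF assms]
    partial_category.contraction_square_pullback[OF assms] by blast

end
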